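(* Let $\gamma$ be a conformal metric on $\mathbb C_\infty$ invariant under radial reflection, $\theta^*\gamma=\gamma$. Then for every $F\in\Upsilon_{0,B_0}$, $$\langle(\Theta F)\,F\rangle_\gamma\ge0.$$
   Context: Riemann sphere $\mathbb C_\infty$, radial reflection $\theta(z)=z/|z|^2=\bar z^{-1}$, $B_0=\{|z|<1\}$. Symbols: a symbol is a finite sequence $Z=[k_1,z_1,\dots,k_n,z_n]$ with $k_i\in\mathbb Z$, $z_i\in\mathbb C_\infty$; the product of symbols is concatenation. $\Upsilon$ is the free complex algebra generated by this monoid (finitely supported formal sums $F=\sum_ZF(Z)Z$); $\Upsilon_0$ consists of $F$ with $F(Z)=0$ whenever $Z$ has two coinciding points; $\Upsilon_A$ of $F$ with $F(Z)=0$ whenever $Z$ has a point outside $A$; $\Upsilon_{0,A}=\Upsilon_0\cap\Upsilon_A$. $\Theta[k_1,z_1,\dots,k_n,z_n]=[-k_1,\theta z_1,\dots,-k_n,\theta z_n]$, extended anti-linearly to $\Upsilon$. Expectations: for a conformal metric $\gamma=e^\sigma|dz|^2$ and $Z$ with distinct points all in $\mathbb C$, $\langle Z\rangle_\gamma=0$ if $\sum k_i\ne0$ and $\langle Z\rangle_\gamma=\exp(-\frac1{8\pi}\sum_ik_i^2\sigma(z_i))\prod_{i<j}|z_i-z_j|^{k_ik_j/2\pi}$ if $\sum k_i=0$ (this is the $\mu\to0$, then regularization-removed, limit of regularized exponentials $\prod[e^{ik_i\phi(z_i)}]_r$ of the Gaussian field with covariance $(-\Delta_\gamma+\mu)^{-1}$).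 If some point is $\infty$, set $\langle Z\rangle_\gamma=\langle[k_1,\beta^{-1}(z_1),\dots,k_n,\beta^{-1}(z_n)]\rangle_{\beta^*\gamma}$ for any Möbius map $\beta$ with all $\beta^{-1}(z_i)\in\mathbb C$ (independent of $\beta$). Extend linearly: $\langle F\rangle_\gamma=\sum_ZF(Z)\langle Z\rangle_\gamma$ for $F\in\Upsilon_0$. *)

theory Defs
  imports "HOL-Analysis.Analysis"
begin

text \<open>The Riemann sphere is modelled as complex option: Some z is z, None is infinity.\<close>
type_synonym rpt = "complex option"

text \<open>A symbol [k1,z1,...,kn,zn] is the list of pairs (k_i, z_i).\<close>
type_synonym symbol = "(int \<times> rpt) list"

text \<open>Elements of Upsilon: coefficient functions (finitely supported, see below).\<close>
type_synonym upsilon = "symbol \<Rightarrow> complex"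

definition theta :: "rpt \<Rightarrow> rpt" where
  "theta p = (case p of None \<Rightarrow> Some 0
              | Some z \<Rightarrow> (if z = 0 then None else Some (1 / cnj z)))"

definition B0 :: "rpt set" where
  "B0 = {Some z | z. cmod z < 1}"

definition Theta_sym :: "symbol \<Rightarrow> symbol" where
  "Theta_sym Z = map (\<lambda>(k, z). (- k, theta z)) Z"

text \<open>Anti-linear extension: since Theta_sym is an involution, the coefficient of
  W in Theta F is the conjugate of the coefficient of Theta_sym W in F.\<close>
definition Theta_up :: "upsilon \<Rightarrow> upsilon" where
  "Theta_up F = (\<lambda>W. cnj (F (Theta_sym W)))"

definition in_Upsilon :: "upsilon \<Rightarrow> bool" where
  "in_Upsilon F \<longleftrightarrow> finite {Z. F Z \<noteq> 0}"

definition in_Upsilon0 :: "upsilon \<Rightarrow> bool" where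
  "in_Upsilon0 F \<longleftrightarrow> in_Upsilon F \<and> (\<forall>Z. F Z \<noteq> 0 \<longrightarrow> distinct (map snd Z))"

definition in_UpsilonA :: "rpt set \<Rightarrow> upsilon \<Rightarrow> bool" where
  "in_UpsilonA A F \<longleftrightarrow> in_Upsilon F \<and> (\<forall>Z. F Z \<noteq> 0 \<longrightarrow> set (map snd Z) \<subseteq> A)"

definition ups_mult :: "upsilon \<Rightarrow> upsilon \<Rightarrow> upsilon" where
  "ups_mult F G = (\<lambda>W. \<Sum>(Z, Z') \<in> {(Z, Z'). Z @ Z' = W}. F Z * G Z')"

fun Ck_on :: "nat \<Rightarrow> complex set \<Rightarrow> (complex \<Rightarrow> real) \<Rightarrow> bool" where
  "Ck_on 0 S f = continuous_on S f"
| "Ck_on (Suc k) S f = (\<exists>fx fy.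
      (\<forall>z\<in>S. (f has_derivative (\<lambda>h. Re h * fx z + Im h * fy z)) (at z))
      \<and> Ck_on k S fx \<and> Ck_on k S fy)"

definition smooth_on :: "complex set \<Rightarrow> (complex \<Rightarrow> real) \<Rightarrow> bool" where
  "smooth_on S f \<longleftrightarrow> (\<forall>k. Ck_on k S f)"

text \<open>gamma = exp(sigma)|dz|^2 on C; it is a (smooth) conformal metric on the sphere
  iff sigma is smooth on C and, in the chart w = 1/z, the conformal factor
  sigma(1/w) - 4 ln|w| extends smoothly across w = 0.\<close>
definition conformal_metric :: "(complex \<Rightarrow> real) \<Rightarrow> bool" where
  "conformal_metric \<sigma> \<longleftrightarrow> smooth_on UNIV \<sigma> \<and>
     (\<exists>\<tau>. smooth_on UNIV \<tau> \<and> (\<forall>w. w \<noteq> 0 \<longrightarrow> \<tau> w = \<sigma> (1 / w) - 4 * ln (cmod w)))"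

text \<open>Value of the conformal factor at infinity in the chart w = 1/z.\<close>
definition sigma_inf :: "(complex \<Rightarrow> real) \<Rightarrow> real" where
  "sigma_inf \<sigma> = Lim (at 0) (\<lambda>w. \<sigma> (1 / w) - 4 * ln (cmod w))"

text \<open>Invariance under radial reflection theta^* gamma = gamma:
  (theta^* gamma)(z) = exp(sigma(1/conj z) - 4 ln|z|)|dz|^2 for z nonzero.\<close>
definition theta_invariant :: "(complex \<Rightarrow> real) \<Rightarrow> bool" where
  "theta_invariant \<sigma> \<longleftrightarrow> (\<forall>z. z \<noteq> 0 \<longrightarrow> \<sigma> (1 / cnj z) - 4 * ln (cmod z) = \<sigma> z)"

definition expect_fin :: "(complex \<Rightarrow> real) \<Rightarrow> int list \<Rightarrow> complex list \<Rightarrow> real" where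
  "expect_fin \<sigma> ks zs =
     (if sum_list ks \<noteq> 0 then 0
      else exp (- (1 / (8 * pi)) * (\<Sum>i<length ks. (real_of_int (ks ! i))\<^sup>2 * \<sigma> (zs ! i)))
         * (\<Prod>(i, j) \<in> {(i, j). i < j \<and> j < length ks}.
              (cmod (zs ! i - zs ! j)) powr (real_of_int (ks ! i * ks ! j) / (2 * pi))))"

text \<open>If a point is infinity we use the Moebius map beta(w) = a + 1/w with a not
  among the points: beta^-1(z) = 1/(z - a), beta^-1(infinity) = 0, and
  beta^* gamma = exp(sigma_beta)|dw|^2 with sigma_beta(w) = sigma(a + 1/w) - 4 ln|w|
  (w nonzero), sigma_beta(0) = sigma_inf sigma.\<close>
definition expect_sym :: "(complex \<Rightarrow> real) \<Rightarrow> symbol \<Rightarrow> real" where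
  "expect_sym \<sigma> Z =
     (let ks = map fst Z; ps = map snd Z in
      if None \<notin> set ps then expect_fin \<sigma> ks (map the ps)
      else (let a = (SOME a. Some a \<notin> set ps) in
            expect_fin (\<lambda>w. if w = 0 then sigma_inf \<sigma> else \<sigma> (a + 1 / w) - 4 * ln (cmod w))
              ks (map (\<lambda>p. case p of None \<Rightarrow> 0 | Some z \<Rightarrow> 1 / (z - a)) ps)))"

definition expect :: "(complex \<Rightarrow> real) \<Rightarrow> upsilon \<Rightarrow> complex" where
  "expect \<sigma> F = (\<Sum>Z \<in> {Z. F Z \<noteq> 0}. F Z * complex_of_real (expect_sym \<sigma> Z))"

end

(*
  For a neutral symbol with distinct finite points the expectation is exp E, where
  E = - (1/8pi) sum k_i^2 sigma(z_i) + (1/4pi) sum_{i <> j} k_i k_j ln |z_i - z_j| is the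
  energy of the charge configuration; a point at infinity is moved to 0 by a Moebius chart,
  and for theta-invariant sigma its self-energy is computed with sigma(0).

  Let Y and Z be symbols in the unit disk. Reflecting the charges of Y through the unit circle
  and using theta-invariance of sigma, the energy of (Theta Y) Z splits as E(Y) + E(Z) + X(Y, Z)
  with X(Y, Z) = - (1/2pi) sum k_i l_j ln |1 - conj(y_i) z_j|, and the expectation vanishes
  unless Y and Z carry the same total charge. Expanding - ln |1 - t| = sum_{n >= 1} Re(t^n) / n
  exhibits X as a limit of sums of rank-one kernels conj(m_n(Y)) m_n(Z), with moments
  m_n(Y) = sum k_i y_i^n. By the Schur product theorem, exp X times exp E(Y) exp E(Z) times the
  indicator of equal total charge is then a positive semidefinite kernel on symbols, and
  <(Theta F) F> is its quadratic form in the coefficients of F.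
*)
theory Submission
  imports Defs
begin

section \<open>Positive semidefinite kernels\<close>

text \<open>Here \<open>0 \<le> c\<close> for complex \<open>c\<close> refers to the order of \<open>HOL-Library.Complex_Order\<close>:
  \<open>c\<close> is a nonnegative real.\<close>
definition pos_semidef_on :: "'a set \<Rightarrow> ('a \<Rightarrow> 'a \<Rightarrow> complex) \<Rightarrow> bool" where
  "pos_semidef_on S K \<longleftrightarrow> (\<forall>c. 0 \<le> (\<Sum>x\<in>S. \<Sum>y\<in>S. cnj (c x) * c y * K x y))"

inductive rank_one_sum :: "('a \<Rightarrow> 'a \<Rightarrow> complex) \<Rightarrow> bool" where
  rank_one_sum_zero: "rank_one_sum (\<lambda>x y. 0)"
| rank_one_sum_add: "rank_one_sum K \<Longrightarrow> rank_one_sum (\<lambda>x y. K x y + cnj (f x) * f y)"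

lemma cnj_mult_self_nonneg: "0 \<le> cnj z * z"
  by (simp add: less_eq_complex_def)

lemma rank_one_sum_pos_semidef_on:
  assumes "rank_one_sum K"
  shows "pos_semidef_on S K"
  using assms
proof induction
  case rank_one_sum_zero
  then show ?case by (simp add: pos_semidef_on_def)
next
  case (rank_one_sum_add K f)
  show ?case unfolding pos_semidef_on_def
  proof
    fix c
    have "0 \<le> (\<Sum>x\<in>S. \<Sum>y\<in>S. cnj (c x) * c y * K x y) + cnj (\<Sum>x\<in>S. c x * f x) * (\<Sum>y\<in>S. c y * f y)"
      using rank_one_sum_add.IH unfolding pos_semidef_on_def
      by (intro add_nonneg_nonneg cnj_mult_self_nonneg) blast
    also have "cnj (\<Sum>x\<in>S. c x * f x) * (\<Sum>y\<in>S. c y * f y) = (\<Sum>x\<in>S. \<Sum>y\<in>S. cnj (c x * f x) * (c y * f y))"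
      by (simp only: sum_product cnj_sum)
    also have "(\<Sum>x\<in>S. \<Sum>y\<in>S. cnj (c x) * c y * K x y) + \<dots>
        = (\<Sum>x\<in>S. \<Sum>y\<in>S. cnj (c x) * c y * (K x y + cnj (f x) * f y))"
      by (simp add: distrib_left sum.distrib mult_ac)
    finally show "0 \<le> (\<Sum>x\<in>S. \<Sum>y\<in>S. cnj (c x) * c y * (K x y + cnj (f x) * f y))" .
  qed
qed

lemma rank_one_sum_rank_one: "rank_one_sum (\<lambda>x y. cnj (f x) * f y)"
  using rank_one_sum_add[OF rank_one_sum_zero, of f] by simp

lemma rank_one_sum_one: "rank_one_sum (\<lambda>x y. 1)"
  using rank_one_sum_rank_one[of "\<lambda>_. 1"] by simp

lemma rank_one_sum_plus:
  assumes "rank_one_sum K" "rank_one_sum L"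
  shows "rank_one_sum (\<lambda>x y. K x y + L x y)"
  using assms(2)
proof induction
  case rank_one_sum_zero
  then show ?case using assms(1) by simp
next
  case (rank_one_sum_add L f)
  then show ?case using rank_one_sum.rank_one_sum_add[of "\<lambda>x y. K x y + L x y" f] by (simp add: add_ac)
qed

lemma rank_one_sum_sum:
  assumes "\<And>i. i \<in> I \<Longrightarrow> rank_one_sum (K i)"
  shows "rank_one_sum (\<lambda>x y. \<Sum>i\<in>I. K i x y)"
  using assms
proof (induction I rule: infinite_finite_induct)
  case (insert i I)
  then show ?case using rank_one_sum_plus[of "K i"] by simp
qed (simp_all add: rank_one_sum_zero)

text \<open>The Schur product theorem; for sums of rank-one kernels it is just distributivity.\<close>
lemma rank_one_sum_mult:
  assumes "rank_one_sum K" "rank_one_sum L"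
  shows "rank_one_sum (\<lambda>x y. K x y * L x y)"
  using assms(2)
proof induction
  case rank_one_sum_zero
  then show ?case by (simp add: rank_one_sum.rank_one_sum_zero)
next
  case (rank_one_sum_add L f)
  have "rank_one_sum (\<lambda>x y. K x y * (cnj (f x) * f y))"
    using assms(1)
  proof induction
    case (rank_one_sum_add K g)
    then show ?case
      using rank_one_sum.rank_one_sum_add[of "\<lambda>x y. K x y * (cnj (f x) * f y)" "\<lambda>x. g x * f x"]
      by (simp add: algebra_simps)
  qed (simp add: rank_one_sum.rank_one_sum_zero)
  from rank_one_sum_plus[OF rank_one_sum_add.IH this] show ?case
    by (simp add: distrib_left)
qed

lemma rank_one_sum_power:
  assumes "rank_one_sum K"
  shows "rank_one_sum (\<lambda>x y. K x y ^ m)"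
proof (induction m)
  case (Suc m)
  then show ?case using rank_one_sum_mult[OF assms Suc.IH] by simp
qed (simp add: rank_one_sum_one)

lemma rank_one_sum_scale:
  assumes "rank_one_sum K" "0 \<le> r"
  shows "rank_one_sum (\<lambda>x y. r *\<^sub>R K x y)"
proof -
  have "rank_one_sum (\<lambda>x y. cnj (of_real (sqrt r)) * of_real (sqrt r))"
    by (rule rank_one_sum_rank_one)
  moreover have "cnj (of_real (sqrt r)) * of_real (sqrt r) = (of_real r :: complex)"
    using assms(2) by (simp flip: of_real_mult)
  ultimately show ?thesis using rank_one_sum_mult[OF _ assms(1)] by (simp add: scaleR_conv_of_real)
qed

lemma rank_one_sum_level_sets:
  assumes "finite V"
  shows "rank_one_sum (\<lambda>x y. if q x = q y \<and> q x \<in> V then 1 else 0)"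
proof -
  have "rank_one_sum (\<lambda>x y. \<Sum>v\<in>V. cnj (if q x = v then 1 else 0) * (if q y = v then 1 else 0))"
    by (intro rank_one_sum_sum rank_one_sum_rank_one)
  moreover have "(\<Sum>v\<in>V. cnj (if q x = v then 1 else 0) * (if q y = v then 1 else 0))
      = (if q x = q y \<and> q x \<in> V then 1 else (0 :: complex))" for x y
  proof -
    have "(\<Sum>v\<in>V. cnj (if q x = v then 1 else 0) * (if q y = v then 1 else 0))
        = (\<Sum>v\<in>V. if v = q x then (if q y = q x then 1 else 0) else (0 :: complex))"
      by (intro sum.cong refl) auto
    then show ?thesis using assms by simp
  qed
  ultimately show ?thesis by simp
qed

lemma pos_semidef_on_limit:
  assumes "\<And>n. pos_semidef_on S (K n)"
    and "\<And>x y. x \<in> S \<Longrightarrow> y \<in> S \<Longrightarrow> (\<lambda>n. K n x y) \<longlonglongrightarrow> L x y"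
  shows "pos_semidef_on S L"
  unfolding pos_semidef_on_def
proof
  fix c
  have "(\<lambda>n. \<Sum>x\<in>S. \<Sum>y\<in>S. cnj (c x) * c y * K n x y) \<longlonglongrightarrow> (\<Sum>x\<in>S. \<Sum>y\<in>S. cnj (c x) * c y * L x y)"
    by (intro tendsto_sum tendsto_mult_left assms(2))
  moreover have "(\<Sum>x\<in>S. \<Sum>y\<in>S. cnj (c x) * c y * K n x y) \<in> \<real>\<^sub>\<ge>\<^sub>0" for n
    using assms(1) by (simp add: pos_semidef_on_def complex_nonneg_Reals_iff less_eq_complex_def)
  ultimately have "(\<Sum>x\<in>S. \<Sum>y\<in>S. cnj (c x) * c y * L x y) \<in> \<real>\<^sub>\<ge>\<^sub>0"
    by (rule closed_sequentially[OF closed_nonneg_Reals_complex, rotated])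
  then show "0 \<le> (\<Sum>x\<in>S. \<Sum>y\<in>S. cnj (c x) * c y * L x y)"
    by (simp add: complex_nonneg_Reals_iff less_eq_complex_def)
qed

lemma pos_semidef_on_mult_exp:
  assumes "rank_one_sum H" "rank_one_sum K"
  shows "pos_semidef_on S (\<lambda>x y. H x y * exp (K x y))"
proof (rule pos_semidef_on_limit)
  show "pos_semidef_on S (\<lambda>x y. H x y * (\<Sum>m<M. K x y ^ m /\<^sub>R fact m))" for M
    by (intro rank_one_sum_pos_semidef_on rank_one_sum_mult[OF assms(1)] rank_one_sum_sum
        rank_one_sum_scale[OF rank_one_sum_power[OF assms(2)]]) simp
  show "(\<lambda>M. H x y * (\<Sum>m<M. K x y ^ m /\<^sub>R fact m)) \<longlonglongrightarrow> H x y * exp (K x y)" for x y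
    using exp_converges[of "K x y"] unfolding sums_def by (rule tendsto_mult_left)
qed

section \<open>Energy of charge configurations\<close>

lemma sum_filter_split:
  fixes g :: "'a \<Rightarrow> 'b :: comm_monoid_add"
  assumes "finite A"
  shows "sum g A = sum g {x \<in> A. P x} + sum g {x \<in> A. \<not> P x}"
proof -
  have "A = {x \<in> A. P x} \<union> {x \<in> A. \<not> P x}" by blast
  then show ?thesis
    using assms by (metis (no_types, lifting) finite_Un sum.union_disjoint disjoint_iff mem_Collect_eq)
qed

lemma sum_square_eq_twice_sum_pairs:
  fixes h :: "nat \<Rightarrow> nat \<Rightarrow> real"
  assumes "\<And>i j. h i j = h j i" "\<And>i. h i i = 0"
  shows "(\<Sum>i<n. \<Sum>j<n. h i j) = 2 * (\<Sum>(i, j)\<in>{(i, j). i < j \<and> j < n}. h i j)"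
proof (induction n)
  case 0
  then show ?case by simp
next
  case (Suc n)
  have split: "{(i, j). i < j \<and> j < Suc n} = {(i, j). i < j \<and> j < n} \<union> (\<lambda>i. (i, n)) ` {..<n}"
    by (auto simp: less_Suc_eq)
  have "finite {(i, j). i < j \<and> j < n}"
    by (rule finite_subset[of _ "{..<n} \<times> {..<n}"]) auto
  then have "(\<Sum>(i, j)\<in>{(i, j). i < j \<and> j < Suc n}. h i j)
      = (\<Sum>(i, j)\<in>{(i, j). i < j \<and> j < n}. h i j) + (\<Sum>i<n. h i n)"
    unfolding split by (subst sum.union_disjoint) (auto simp: sum.reindex inj_on_def)
  moreover have "(\<Sum>i<Suc n. \<Sum>j<Suc n. h i j) = (\<Sum>i<n. \<Sum>j<n. h i j) + 2 * (\<Sum>i<n. h i n)"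
    using assms by (simp add: sum.distrib)
  ultimately show ?case using Suc.IH by simp
qed

lemma sum_sum_nth_distinct:
  assumes "distinct L"
  shows "(\<Sum>i<length L. \<Sum>j<length L. g (L ! i) (L ! j)) = (\<Sum>x\<in>set L. \<Sum>y\<in>set L. g x y)"
proof -
  have bij: "bij_betw ((!) L) {..<length L} (set L)"
    using assms by (rule bij_betw_nth) simp_all
  have "(\<Sum>i<length L. \<Sum>j<length L. g (L ! i) (L ! j)) = (\<Sum>i<length L. \<Sum>y\<in>set L. g (L ! i) y)"
    by (intro sum.cong refl sum.reindex_bij_betw[OF bij])
  also have "\<dots> = (\<Sum>x\<in>set L. \<Sum>y\<in>set L. g x y)"
    by (rule sum.reindex_bij_betw[OF bij])
  finally show ?thesis .
qed

definition total_charge :: "(int \<times> complex) set \<Rightarrow> int" where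
  "total_charge A = (\<Sum>x\<in>A. fst x)"

definition self_energy :: "(complex \<Rightarrow> real) \<Rightarrow> (int \<times> complex) set \<Rightarrow> real" where
  "self_energy \<sigma> A = (\<Sum>x\<in>A. (real_of_int (fst x))\<^sup>2 * \<sigma> (snd x))"

text \<open>Diagonal terms vanish since \<open>ln 0 = 0\<close>; for configurations with distinct points,
  \<open>interaction A A\<close> is therefore twice the sum over unordered pairs.\<close>
definition interaction :: "(int \<times> complex) set \<Rightarrow> (int \<times> complex) set \<Rightarrow> real" where
  "interaction A B = (\<Sum>x\<in>A. \<Sum>y\<in>B. real_of_int (fst x * fst y) * ln (cmod (snd x - snd y)))"

definition energy :: "(complex \<Rightarrow> real) \<Rightarrow> (int \<times> complex) set \<Rightarrow> real" where
  "energy \<sigma> A = - self_energy \<sigma> A / (8 * pi) + interaction A A / (4 * pi)"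

lemma expect_fin_eq_exp_energy:
  fixes L :: "(int \<times> complex) list"
  assumes distinct: "distinct (map snd L)" and neutral: "sum_list (map fst L) = 0"
  shows "expect_fin \<sigma> (map fst L) (map snd L) = exp (energy \<sigma> (set L))"
proof -
  define n where "n = length L"
  define P where "P = {(i, j). i < j \<and> j < n}"
  define h where
    "h i j = real_of_int (fst (L ! i) * fst (L ! j)) / (2 * pi) * ln (cmod (snd (L ! i) - snd (L ! j)))"
    for i j
  have distinct_L: "distinct L"
    using distinct by (simp add: distinct_map)
  have bij: "bij_betw ((!) L) {..<n} (set L)"
    using distinct_L by (intro bij_betw_nth) (simp_all add: n_def)
  have self: "(\<Sum>i<n. (real_of_int (fst (L ! i)))\<^sup>2 * \<sigma> (snd (L ! i))) = self_energy \<sigma> (set L)"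
    unfolding self_energy_def by (rule sum.reindex_bij_betw[OF bij])
  have "(\<Sum>i<n. \<Sum>j<n. h i j) = interaction (set L) (set L) / (2 * pi)"
    using sum_sum_nth_distinct[OF distinct_L,
        of "\<lambda>x y. real_of_int (fst x * fst y) / (2 * pi) * ln (cmod (snd x - snd y))"]
    unfolding interaction_def h_def n_def sum_divide_distrib by (simp add: mult.commute)
  then have pairs: "(\<Sum>(i, j)\<in>P. h i j) = interaction (set L) (set L) / (4 * pi)"
    using sum_square_eq_twice_sum_pairs[of h n]
    by (simp add: h_def P_def mult.commute norm_minus_commute)
  have "(\<Prod>(i, j)\<in>P. cmod (map snd L ! i - map snd L ! j)
          powr (real_of_int (map fst L ! i * map fst L ! j) / (2 * pi)))
      = (\<Prod>(i, j)\<in>P. exp (h i j))"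
  proof (intro prod.cong refl, clarify)
    fix i j assume ij: "(i, j) \<in> P"
    then have "snd (L ! i) \<noteq> snd (L ! j)"
      using nth_eq_iff_index_eq[OF distinct, of i j] by (auto simp: P_def n_def)
    with ij show "cmod (map snd L ! i - map snd L ! j)
          powr (real_of_int (map fst L ! i * map fst L ! j) / (2 * pi)) = exp (h i j)"
      by (simp add: P_def n_def powr_def h_def mult.commute)
  qed
  also have "\<dots> = exp (\<Sum>(i, j)\<in>P. h i j)"
  proof -
    have "finite P" unfolding P_def by (rule finite_subset[of _ "{..<n} \<times> {..<n}"]) auto
    then show ?thesis by (simp add: exp_sum case_prod_unfold)
  qed
  finally show ?thesis
    unfolding expect_fin_def energy_def using neutral self pairs
    by (simp add: P_def n_def exp_add[symmetric])
qed

lemma interaction_commute: "interaction A B = interaction B A"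
  unfolding interaction_def by (subst sum.swap) (simp add: mult.commute norm_minus_commute)

lemma interaction_Un_left:
  "finite A \<Longrightarrow> finite B \<Longrightarrow> A \<inter> B = {} \<Longrightarrow> interaction (A \<union> B) C = interaction A C + interaction B C"
  unfolding interaction_def by (rule sum.union_disjoint)

lemma interaction_Un_right:
  "finite A \<Longrightarrow> finite B \<Longrightarrow> A \<inter> B = {} \<Longrightarrow> interaction C (A \<union> B) = interaction C A + interaction C B"
  by (metis interaction_Un_left interaction_commute)

lemma energy_Un:
  assumes "finite A" "finite B" "A \<inter> B = {}"
  shows "energy \<sigma> (A \<union> B) = energy \<sigma> A + energy \<sigma> B + interaction A B / (2 * pi)"
proof -
  have "interaction (A \<union> B) (A \<union> B) = interaction A A + interaction B B + 2 * interaction A B"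
    using interaction_Un_left[OF assms] interaction_Un_right[OF assms] interaction_commute[of B A]
    by simp
  moreover have "self_energy \<sigma> (A \<union> B) = self_energy \<sigma> A + self_energy \<sigma> B"
    unfolding self_energy_def using assms by (rule sum.union_disjoint)
  ultimately show ?thesis
    unfolding energy_def by (simp add: field_simps)
qed

lemma energy_neg_charges: "energy \<sigma> ((\<lambda>(k, z). (- k, z)) ` A) = energy \<sigma> A"
proof -
  have inj: "inj_on (\<lambda>(k, z). (- k, z)) A" by (auto simp: inj_on_def)
  show ?thesis
    unfolding energy_def self_energy_def interaction_def sum.reindex[OF inj]
    by (simp add: case_prod_unfold)
qed

lemma energy_at_point:
  assumes "inj_on snd A" "\<And>x. x \<in> A \<Longrightarrow> snd x = z"
  shows "energy \<sigma> A = - (real_of_int (total_charge A))\<^sup>2 * \<sigma> z / (8 * pi)"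
proof -
  have "A \<subseteq> {x}" if "x \<in> A" for x
  proof
    fix y assume "y \<in> A"
    with that have "snd y = snd x" using assms(2) by simp
    with \<open>y \<in> A\<close> that show "y \<in> {x}" using inj_onD[OF assms(1)] by blast
  qed
  then consider "A = {}" | x where "A = {x}" "snd x = z"
    using assms(2) by blast
  then show ?thesis
    by cases (simp_all add: energy_def self_energy_def interaction_def total_charge_def)
qed

lemma total_charge_split_origin:
  "finite A \<Longrightarrow> total_charge A = total_charge {x \<in> A. snd x \<noteq> 0} + total_charge {x \<in> A. snd x = 0}"
  using sum_filter_split[of A fst "\<lambda>x. snd x = 0"] by (simp add: total_charge_def)

lemma energy_split_origin:
  assumes "finite A" "inj_on snd A"
  shows "energy \<sigma> A = energy \<sigma> {x \<in> A. snd x \<noteq> 0}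
      - (real_of_int (total_charge {x \<in> A. snd x = 0}))\<^sup>2 * \<sigma> 0 / (8 * pi)
      + real_of_int (total_charge {x \<in> A. snd x = 0})
        * (\<Sum>x\<in>{x \<in> A. snd x \<noteq> 0}. real_of_int (fst x) * ln (cmod (snd x))) / (2 * pi)"
proof -
  let ?A' = "{x \<in> A. snd x \<noteq> 0}" and ?A0 = "{x \<in> A. snd x = 0}"
  have "energy \<sigma> (?A' \<union> ?A0) = energy \<sigma> ?A' + energy \<sigma> ?A0 + interaction ?A' ?A0 / (2 * pi)"
    using assms(1) by (intro energy_Un) auto
  moreover have "?A' \<union> ?A0 = A" by blast
  moreover have "energy \<sigma> ?A0 = - (real_of_int (total_charge ?A0))\<^sup>2 * \<sigma> 0 / (8 * pi)"
    using assms(2) by (intro energy_at_point) (auto intro: inj_on_subset)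
  moreover have "interaction ?A' ?A0
      = real_of_int (total_charge ?A0) * (\<Sum>x\<in>?A'. real_of_int (fst x) * ln (cmod (snd x)))"
    unfolding interaction_def total_charge_def
    by (simp add: sum_distrib_left sum_distrib_right mult_ac)
  ultimately show ?thesis by simp
qed

lemma interaction_image_conformal:
  assumes "finite A" "inj_on snd A" "inj_on g (snd ` A)"
    and "\<And>z w. z \<in> snd ` A \<Longrightarrow> w \<in> snd ` A \<Longrightarrow> z \<noteq> w \<Longrightarrow>
      ln (cmod (g z - g w)) = ln (cmod (z - w)) + \<alpha> z + \<alpha> w"
  shows "interaction ((\<lambda>(k, z). (k, g z)) ` A) ((\<lambda>(k, z). (k, g z)) ` A)
    = interaction A A + 2 * real_of_int (total_charge A) * (\<Sum>x\<in>A. real_of_int (fst x) * \<alpha> (snd x))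
      - 2 * (\<Sum>x\<in>A. (real_of_int (fst x))\<^sup>2 * \<alpha> (snd x))"
proof -
  let ?G = "\<lambda>(k, z). (k, g z)"
  have inj: "inj_on ?G A"
    using assms(3) by (auto simp: inj_on_def)
  have summand: "real_of_int (fst x * fst y) * ln (cmod (g (snd x) - g (snd y)))
      = real_of_int (fst x * fst y) * ln (cmod (snd x - snd y))
        + real_of_int (fst y) * (real_of_int (fst x) * \<alpha> (snd x))
        + real_of_int (fst x) * (real_of_int (fst y) * \<alpha> (snd y))
        - (if y = x then 2 * ((real_of_int (fst x))\<^sup>2 * \<alpha> (snd x)) else 0)"
    if "x \<in> A" "y \<in> A" for x y
  proof (cases "y = x")
    case True
    then show ?thesis by (simp add: power2_eq_square algebra_simps)
  next
    case False
    then have "snd x \<noteq> snd y" using assms(2) that by (auto simp: inj_on_def)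
    then show ?thesis using assms(4) that False by (simp add: algebra_simps)
  qed
  have "interaction (?G ` A) (?G ` A)
      = (\<Sum>x\<in>A. \<Sum>y\<in>A. real_of_int (fst x * fst y) * ln (cmod (g (snd x) - g (snd y))))"
    unfolding interaction_def sum.reindex[OF inj] by (simp add: case_prod_unfold)
  also have "\<dots> = (\<Sum>x\<in>A. \<Sum>y\<in>A. real_of_int (fst x * fst y) * ln (cmod (snd x - snd y))
        + real_of_int (fst y) * (real_of_int (fst x) * \<alpha> (snd x))
        + real_of_int (fst x) * (real_of_int (fst y) * \<alpha> (snd y))
        - (if y = x then 2 * ((real_of_int (fst x))\<^sup>2 * \<alpha> (snd x)) else 0))"
    by (intro sum.cong refl summand)
  also have "\<dots> = interaction A A
      + (\<Sum>x\<in>A. \<Sum>y\<in>A. real_of_int (fst y) * (real_of_int (fst x) * \<alpha> (snd x)))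
      + (\<Sum>x\<in>A. \<Sum>y\<in>A. real_of_int (fst x) * (real_of_int (fst y) * \<alpha> (snd y)))
      - (\<Sum>x\<in>A. \<Sum>y\<in>A. if y = x then 2 * ((real_of_int (fst x))\<^sup>2 * \<alpha> (snd x)) else 0)"
    unfolding interaction_def by (simp add: sum.distrib sum_subtractf)
  also have "(\<Sum>x\<in>A. \<Sum>y\<in>A. real_of_int (fst y) * (real_of_int (fst x) * \<alpha> (snd x)))
      = real_of_int (total_charge A) * (\<Sum>x\<in>A. real_of_int (fst x) * \<alpha> (snd x))"
    by (simp add: total_charge_def sum_distrib_left flip: sum_distrib_right)
  also have "(\<Sum>x\<in>A. \<Sum>y\<in>A. real_of_int (fst x) * (real_of_int (fst y) * \<alpha> (snd y)))
      = real_of_int (total_charge A) * (\<Sum>x\<in>A. real_of_int (fst x) * \<alpha> (snd x))"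
    by (simp add: total_charge_def sum_distrib_right flip: sum_distrib_left)
  also have "(\<Sum>x\<in>A. \<Sum>y\<in>A. if y = x then 2 * ((real_of_int (fst x))\<^sup>2 * \<alpha> (snd x)) else 0)
      = 2 * (\<Sum>x\<in>A. (real_of_int (fst x))\<^sup>2 * \<alpha> (snd x))"
    using assms(1) by (simp add: sum_distrib_left)
  finally show ?thesis by simp
qed

text \<open>The hypotheses hold for a Moebius map \<open>g\<close> with \<open>\<alpha> = ln \<bar>g'\<bar> / 2\<close>, where \<open>\<sigma>'\<close> is
  the conformal factor of the push-forward of \<open>exp \<sigma> \<bar>dz\<bar>\<^sup>2\<close> by \<open>g\<close>.\<close>
lemma energy_image_conformal:
  assumes "finite A" "inj_on snd A" "inj_on g (snd ` A)"
    and "\<And>z. z \<in> snd ` A \<Longrightarrow> \<sigma>' (g z) = \<sigma> z - 4 * \<alpha> z"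
    and "\<And>z w. z \<in> snd ` A \<Longrightarrow> w \<in> snd ` A \<Longrightarrow> z \<noteq> w \<Longrightarrow>
      ln (cmod (g z - g w)) = ln (cmod (z - w)) + \<alpha> z + \<alpha> w"
  shows "energy \<sigma>' ((\<lambda>(k, z). (k, g z)) ` A)
    = energy \<sigma> A + real_of_int (total_charge A) * (\<Sum>x\<in>A. real_of_int (fst x) * \<alpha> (snd x)) / (2 * pi)"
proof -
  let ?G = "\<lambda>(k, z). (k, g z)"
  let ?S = "\<Sum>x\<in>A. real_of_int (fst x) * \<alpha> (snd x)"
  let ?Q = "\<Sum>x\<in>A. (real_of_int (fst x))\<^sup>2 * \<alpha> (snd x)"
  have inj: "inj_on ?G A"
    using assms(3) by (auto simp: inj_on_def)
  have self: "self_energy \<sigma>' (?G ` A) = self_energy \<sigma> A - 4 * ?Q"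
    unfolding self_energy_def sum.reindex[OF inj]
    by (simp add: case_prod_unfold assms(4) algebra_simps sum_subtractf sum_distrib_left)
  have "energy \<sigma>' (?G ` A) = - self_energy \<sigma>' (?G ` A) / (8 * pi) + interaction (?G ` A) (?G ` A) / (4 * pi)"
    by (simp add: energy_def)
  also have "\<dots> = - (self_energy \<sigma> A - 4 * ?Q) / (8 * pi)
      + (interaction A A + 2 * real_of_int (total_charge A) * ?S - 2 * ?Q) / (4 * pi)"
    using interaction_image_conformal[OF assms(1-3) assms(5)] self by simp
  also have "\<dots> = energy \<sigma> A + real_of_int (total_charge A) * ?S / (2 * pi)"
    unfolding energy_def by (simp add: field_simps)
  finally show ?thesis .
qed

lemma ln_norm_diff_inverse_shift:
  fixes z w a :: complex
  assumes "z \<noteq> a" "w \<noteq> a" "z \<noteq> w"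
  shows "ln (cmod (1 / (z - a) - 1 / (w - a)))
    = ln (cmod (z - w)) + - ln (cmod (z - a)) + - ln (cmod (w - a))"
proof -
  have "1 / (z - a) - 1 / (w - a) = (w - z) / ((z - a) * (w - a))"
    using assms by (simp add: field_simps)
  then have "cmod (1 / (z - a) - 1 / (w - a)) = cmod (z - w) / (cmod (z - a) * cmod (w - a))"
    by (simp add: norm_divide norm_mult norm_minus_commute)
  then show ?thesis using assms by (simp add: ln_div ln_mult)
qed

text \<open>The conformal factor on the left is that of the pull-back of \<open>exp \<sigma> \<bar>dz\<bar>\<^sup>2\<close> by the chart
  \<open>w \<mapsto> a + 1 / w\<close> of \<open>expect_sym\<close>, in which infinity sits at \<open>w = 0\<close> together with the charges \<open>P\<close>.\<close>
lemma energy_chart_at_infinity: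
  fixes a :: complex and A P :: "(int \<times> complex) set"
  assumes "finite A" "inj_on snd A" "\<And>x. x \<in> A \<Longrightarrow> snd x \<noteq> a"
    and "finite P" "inj_on snd P" "\<And>x. x \<in> P \<Longrightarrow> snd x = 0"
    and "total_charge A + total_charge P = 0"
  shows "energy (\<lambda>w. if w = 0 then s else \<sigma> (a + 1 / w) - 4 * ln (cmod w))
      ((\<lambda>(k, z). (k, 1 / (z - a))) ` A \<union> P)
    = energy \<sigma> A - (real_of_int (total_charge P))\<^sup>2 * s / (8 * pi)"
proof -
  define \<sigma>' where "\<sigma>' = (\<lambda>w. if w = 0 then s else \<sigma> (a + 1 / w) - 4 * ln (cmod w))"
  define S where "S = (\<Sum>x\<in>A. real_of_int (fst x) * - ln (cmod (snd x - a)))"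
  let ?M = "\<lambda>(k, z). (k, 1 / (z - a))"
  have inj: "inj_on ?M A"
    using assms(3) by (auto simp: inj_on_def)
  have disjoint: "?M ` A \<inter> P = {}"
    using assms(3,6) by force
  have image: "energy \<sigma>' (?M ` A) = energy \<sigma> A + real_of_int (total_charge A) * S / (2 * pi)"
    unfolding S_def
  proof (rule energy_image_conformal[OF assms(1,2)])
    show "inj_on (\<lambda>z. 1 / (z - a)) (snd ` A)"
      using assms(3) by (auto simp: inj_on_def)
    show "\<sigma>' (1 / (z - a)) = \<sigma> z - 4 * - ln (cmod (z - a))" if "z \<in> snd ` A" for z
      using assms(3) that by (auto simp: \<sigma>'_def norm_divide ln_div)
    show "ln (cmod (1 / (z - a) - 1 / (w - a)))
        = ln (cmod (z - w)) + - ln (cmod (z - a)) + - ln (cmod (w - a))"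
      if "z \<in> snd ` A" "w \<in> snd ` A" "z \<noteq> w" for z w
      by (rule ln_norm_diff_inverse_shift) (use assms(3) that in auto)
  qed
  have point: "energy \<sigma>' P = - (real_of_int (total_charge P))\<^sup>2 * s / (8 * pi)"
    using energy_at_point[OF assms(5,6)] by (simp add: \<sigma>'_def)
  have cross: "interaction (?M ` A) P = real_of_int (total_charge P) * S"
    unfolding interaction_def sum.reindex[OF inj] S_def total_charge_def
    using assms(3,6)
    by (simp add: case_prod_unfold norm_divide ln_div sum_negf sum_distrib_left sum_distrib_right mult_ac)
  have neutral: "real_of_int (total_charge A) = - real_of_int (total_charge P)"
    using arg_cong[OF assms(7), of real_of_int] by simp
  have "energy \<sigma>' (?M ` A \<union> P) = energy \<sigma>' (?M ` A) + energy \<sigma>' P + interaction (?M ` A) P / (2 * pi)"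
    by (rule energy_Un[OF finite_imageI[OF assms(1)] assms(4) disjoint])
  also have "\<dots> = energy \<sigma> A - (real_of_int (total_charge P))\<^sup>2 * s / (8 * pi)"
    unfolding image point cross neutral by simp
  finally show ?thesis
    unfolding \<sigma>'_def .
qed

lemma ln_norm_diff_inverse_cnj:
  fixes z w :: complex
  assumes "z \<noteq> 0" "w \<noteq> 0" "z \<noteq> w"
  shows "ln (cmod (1 / cnj z - 1 / cnj w)) = ln (cmod (z - w)) + - ln (cmod z) + - ln (cmod w)"
proof -
  have "1 / cnj z - 1 / cnj w = cnj (w - z) / (cnj z * cnj w)"
    using assms by (simp add: field_simps)
  then have "cmod (1 / cnj z - 1 / cnj w) = cmod (z - w) / (cmod z * cmod w)"
    using complex_mod_cnj[of "w - z"] by (simp add: norm_divide norm_mult norm_minus_commute)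
  then show ?thesis using assms by (simp add: ln_div ln_mult)
qed

lemma ln_norm_inverse_cnj_diff:
  fixes z w :: complex
  assumes "z \<noteq> 0" "cmod z < 1" "cmod w < 1"
  shows "ln (cmod (1 / cnj z - w)) = ln (cmod (1 - cnj z * w)) - ln (cmod z)"
proof -
  have "cmod z * cmod w < 1 * 1"
    using assms by (intro mult_strict_mono') auto
  then have "cmod (cnj z * w) < 1"
    by (simp add: norm_mult)
  then have "1 - cnj z * w \<noteq> 0" by auto
  moreover have "1 / cnj z - w = (1 - cnj z * w) / cnj z"
    using assms by (simp add: field_simps)
  ultimately show ?thesis using assms by (simp add: norm_divide ln_div)
qed

lemma theta_invariant_inverse_cnj:
  "theta_invariant \<sigma> \<Longrightarrow> z \<noteq> 0 \<Longrightarrow> \<sigma> (1 / cnj z) = \<sigma> z - 4 * - ln (cmod z)"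
  unfolding theta_invariant_def by (drule spec[of _ z]) simp

lemma sigma_inf_theta_invariant:
  assumes "continuous_on UNIV \<sigma>" "theta_invariant \<sigma>"
  shows "sigma_inf \<sigma> = \<sigma> 0"
proof -
  have "isCont \<sigma> 0"
    using assms(1) by (simp add: continuous_on_eq_continuous_at)
  moreover have "(cnj \<longlongrightarrow> 0) (at (0 :: complex))"
    using tendsto_cnj[OF tendsto_ident_at, of "0 :: complex" UNIV] by simp
  ultimately have "((\<lambda>w. \<sigma> (cnj w)) \<longlongrightarrow> \<sigma> 0) (at 0)"
    by (rule isCont_tendsto_compose)
  moreover have "\<sigma> (cnj w) = \<sigma> (1 / w) - 4 * ln (cmod w)" if "w \<noteq> 0" for w
    using assms(2) that unfolding theta_invariant_def by (drule_tac spec[of _ "cnj w"]) simp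
  then have "\<forall>\<^sub>F w in at 0. \<sigma> (cnj w) = \<sigma> (1 / w) - 4 * ln (cmod w)"
    by (auto simp: eventually_at_filter)
  ultimately have "((\<lambda>w. \<sigma> (1 / w) - 4 * ln (cmod w)) \<longlongrightarrow> \<sigma> 0) (at 0)"
    by (simp add: tendsto_cong)
  then show ?thesis
    unfolding sigma_inf_def by (intro tendsto_Lim) simp_all
qed

lemma energy_reflect:
  assumes "theta_invariant \<sigma>" "finite A" "inj_on snd A" "\<And>x. x \<in> A \<Longrightarrow> snd x \<noteq> 0"
  shows "energy \<sigma> ((\<lambda>(k, z). (- k, 1 / cnj z)) ` A)
    = energy \<sigma> A - real_of_int (total_charge A) * (\<Sum>x\<in>A. real_of_int (fst x) * ln (cmod (snd x))) / (2 * pi)"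
proof -
  have "(\<lambda>(k, z). (- k, 1 / cnj z)) ` A = (\<lambda>(k, z). (- k, z)) ` (\<lambda>(k, z). (k, 1 / cnj z)) ` A"
    by (auto simp: image_image case_prod_unfold)
  then have "energy \<sigma> ((\<lambda>(k, z). (- k, 1 / cnj z)) ` A) = energy \<sigma> ((\<lambda>(k, z). (k, 1 / cnj z)) ` A)"
    by (simp add: energy_neg_charges)
  also have "\<dots> = energy \<sigma> A
      + real_of_int (total_charge A) * (\<Sum>x\<in>A. real_of_int (fst x) * - ln (cmod (snd x))) / (2 * pi)"
  proof (rule energy_image_conformal[OF assms(2,3)])
    show "inj_on (\<lambda>z. 1 / cnj z) (snd ` A)"
      by (auto simp: inj_on_def)
    show "\<sigma> (1 / cnj z) = \<sigma> z - 4 * - ln (cmod z)" if "z \<in> snd ` A" for z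
      by (rule theta_invariant_inverse_cnj[OF assms(1)]) (use assms(4) that in auto)
    show "ln (cmod (1 / cnj z - 1 / cnj w)) = ln (cmod (z - w)) + - ln (cmod z) + - ln (cmod w)"
      if "z \<in> snd ` A" "w \<in> snd ` A" "z \<noteq> w" for z w
      by (rule ln_norm_diff_inverse_cnj) (use assms(4) that in auto)
  qed
  finally show ?thesis by (simp add: sum_negf)
qed

definition cross_energy :: "(int \<times> complex) set \<Rightarrow> (int \<times> complex) set \<Rightarrow> real" where
  "cross_energy A B =
     - (\<Sum>x\<in>A. \<Sum>y\<in>B. real_of_int (fst x * fst y) * ln (cmod (1 - cnj (snd x) * snd y))) / (2 * pi)"

lemma cross_energy_split_origin:
  assumes "finite A"
  shows "cross_energy A B = cross_energy {x \<in> A. snd x \<noteq> 0} B"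
proof -
  let ?g = "\<lambda>x. \<Sum>y\<in>B. real_of_int (fst x * fst y) * ln (cmod (1 - cnj (snd x) * snd y))"
  have "sum ?g {x \<in> A. snd x = 0} = 0"
    by (rule sum.neutral) simp
  then show ?thesis
    using sum_filter_split[OF assms, of ?g "\<lambda>x. snd x = 0"] by (simp add: cross_energy_def)
qed

lemma interaction_reflect:
  assumes "\<And>x. x \<in> A \<Longrightarrow> snd x \<noteq> 0 \<and> cmod (snd x) < 1" "\<And>y. y \<in> B \<Longrightarrow> cmod (snd y) < 1"
  shows "interaction ((\<lambda>(k, z). (- k, 1 / cnj z)) ` A) B
    = 2 * pi * cross_energy A B
      + real_of_int (total_charge B) * (\<Sum>x\<in>A. real_of_int (fst x) * ln (cmod (snd x)))"
proof -
  have inj: "inj_on (\<lambda>(k, z). (- k, 1 / cnj z)) A"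
    by (auto simp: inj_on_def)
  have "interaction ((\<lambda>(k, z). (- k, 1 / cnj z)) ` A) B
      = (\<Sum>x\<in>A. \<Sum>y\<in>B. - (real_of_int (fst x * fst y) * ln (cmod (1 - cnj (snd x) * snd y)))
          + real_of_int (fst y) * (real_of_int (fst x) * ln (cmod (snd x))))"
    unfolding interaction_def sum.reindex[OF inj]
    using assms by (intro sum.cong refl) (simp add: case_prod_unfold ln_norm_inverse_cnj_diff algebra_simps)
  moreover have "2 * pi * cross_energy A B
      = - (\<Sum>x\<in>A. \<Sum>y\<in>B. real_of_int (fst x * fst y) * ln (cmod (1 - cnj (snd x) * snd y)))"
    by (simp add: cross_energy_def)
  ultimately show ?thesis
    unfolding total_charge_def
    by (simp add: sum.distrib sum_subtractf sum_distrib_left sum_distrib_right sum.swap[of _ A B])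
qed

lemma energy_reflect_Un:
  assumes "theta_invariant \<sigma>" "finite A" "inj_on snd A" "\<And>x. x \<in> A \<Longrightarrow> snd x \<noteq> 0 \<and> cmod (snd x) < 1"
    and "finite B" "\<And>y. y \<in> B \<Longrightarrow> cmod (snd y) < 1"
  shows "energy \<sigma> ((\<lambda>(k, z). (- k, 1 / cnj z)) ` A \<union> B) = energy \<sigma> A + energy \<sigma> B + cross_energy A B
     + real_of_int (total_charge B - total_charge A)
       * (\<Sum>x\<in>A. real_of_int (fst x) * ln (cmod (snd x))) / (2 * pi)"
proof -
  let ?R = "\<lambda>(k, z). (- k, 1 / cnj z)"
  let ?S = "\<Sum>x\<in>A. real_of_int (fst x) * ln (cmod (snd x))"
  have "?R x \<notin> B" if "x \<in> A" for x
  proof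
    assume "?R x \<in> B"
    then have "cmod (1 / cnj (snd x)) < 1"
      using assms(6) by (auto simp: case_prod_unfold)
    moreover have "1 < cmod (1 / cnj (snd x))"
      using assms(4)[OF that] by (simp add: norm_divide)
    ultimately show False by simp
  qed
  then have "?R ` A \<inter> B = {}" by blast
  then have "energy \<sigma> (?R ` A \<union> B) = energy \<sigma> (?R ` A) + energy \<sigma> B + interaction (?R ` A) B / (2 * pi)"
    by (rule energy_Un[OF finite_imageI[OF assms(2)] assms(5)])
  also have "\<dots> = energy \<sigma> A - real_of_int (total_charge A) * ?S / (2 * pi) + energy \<sigma> B
      + (2 * pi * cross_energy A B + real_of_int (total_charge B) * ?S) / (2 * pi)"
  proof -
    have "\<And>x. x \<in> A \<Longrightarrow> snd x \<noteq> 0" using assms(4) by blast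
    from energy_reflect[OF assms(1-3) this] interaction_reflect[OF assms(4,6)] show ?thesis
      by (simp only:)
  qed
  also have "\<dots> = energy \<sigma> A + energy \<sigma> B + cross_energy A B
      + real_of_int (total_charge B - total_charge A) * ?S / (2 * pi)"
    by (simp add: add_divide_distrib diff_divide_distrib left_diff_distrib)
  finally show ?thesis .
qed

lemma energy_reflect_nonzero_Un:
  assumes "theta_invariant \<sigma>" "finite A" "inj_on snd A" "\<And>x. x \<in> A \<Longrightarrow> cmod (snd x) < 1"
    and "finite B" "\<And>y. y \<in> B \<Longrightarrow> cmod (snd y) < 1" and "total_charge A = total_charge B"
  shows "energy \<sigma> ((\<lambda>(k, z). (- k, 1 / cnj z)) ` {x \<in> A. snd x \<noteq> 0} \<union> B)
      - (real_of_int (total_charge {x \<in> A. snd x = 0}))\<^sup>2 * \<sigma> 0 / (8 * pi)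
    = energy \<sigma> A + energy \<sigma> B + cross_energy A B"
proof -
  define A' where "A' = {x \<in> A. snd x \<noteq> 0}"
  define k0 where "k0 = total_charge {x \<in> A. snd x = 0}"
  define S where "S = (\<Sum>x\<in>A'. real_of_int (fst x) * ln (cmod (snd x)))"
  have "energy \<sigma> ((\<lambda>(k, z). (- k, 1 / cnj z)) ` A' \<union> B)
      = energy \<sigma> A' + energy \<sigma> B + cross_energy A' B
        + real_of_int (total_charge B - total_charge A') * S / (2 * pi)"
    unfolding S_def
  proof (rule energy_reflect_Un[OF assms(1) _ _ _ assms(5,6)])
    show "inj_on snd A'" using assms(3) by (auto simp: A'_def intro: inj_on_subset)
  qed (use assms(2,4) in \<open>auto simp: A'_def\<close>)
  also have "energy \<sigma> A' = energy \<sigma> A + (real_of_int k0)\<^sup>2 * \<sigma> 0 / (8 * pi) - real_of_int k0 * S / (2 * pi)"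
    using energy_split_origin[OF assms(2,3), of \<sigma>] by (simp add: A'_def k0_def S_def)
  also have "total_charge A' = total_charge A - k0"
    using total_charge_split_origin[OF assms(2)] by (simp add: A'_def k0_def)
  also have "cross_energy A' B = cross_energy A B"
    using cross_energy_split_origin[OF assms(2)] by (simp add: A'_def)
  finally show ?thesis
    using assms(7) by (simp add: A'_def k0_def add_divide_distrib diff_divide_distrib left_diff_distrib)
qed

section \<open>Expectations of symbols\<close>

definition charges_of :: "symbol \<Rightarrow> (int \<times> complex) set" where
  "charges_of W = (\<lambda>(k, p). (k, the p)) ` {x \<in> set W. snd x \<noteq> None}"

definition charge_at_infinity :: "symbol \<Rightarrow> int" where
  "charge_at_infinity W = (\<Sum>x\<in>{x \<in> set W. snd x = None}. fst x)"

lemma inj_on_the_finite_points: "inj_on (\<lambda>(k, p). (k, the p)) {x \<in> X. snd x \<noteq> None}"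
  by (auto simp: inj_on_def)

lemma finite_charges_of [simp]: "finite (charges_of W)"
  by (simp add: charges_of_def)

lemma inj_on_snd_charges_of:
  assumes "distinct (map snd W)"
  shows "inj_on snd (charges_of W)"
  using assms by (auto simp: charges_of_def inj_on_def distinct_map) (metis prod.inject snd_conv)

lemma sum_list_charges_eq:
  assumes "distinct (map snd W)"
  shows "sum_list (map fst W) = total_charge (charges_of W) + charge_at_infinity W"
proof -
  have "sum_list (map fst W) = sum fst (set W)"
    using assms by (simp add: distinct_map sum.distinct_set_conv_list)
  also have "\<dots> = sum fst {x \<in> set W. snd x = None} + sum fst {x \<in> set W. snd x \<noteq> None}"
    by (rule sum_filter_split) simp
  also have "sum fst {x \<in> set W. snd x \<noteq> None} = total_charge (charges_of W)"
    unfolding total_charge_def charges_of_def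
    by (rule sum.reindex_cong[OF inj_on_the_finite_points refl, symmetric]) (simp add: case_prod_unfold)
  finally show ?thesis by (simp add: charge_at_infinity_def)
qed

lemma charge_at_infinity_eq_0: "None \<notin> set (map snd W) \<Longrightarrow> charge_at_infinity W = 0"
  unfolding charge_at_infinity_def
  by (rule sum.neutral) (metis (mono_tags) image_eqI mem_Collect_eq set_map)

lemma expect_sym_non_neutral: "sum_list (map fst W) \<noteq> 0 \<Longrightarrow> expect_sym \<sigma> W = 0"
  by (simp add: expect_sym_def expect_fin_def Let_def)

lemma expect_sym_finite_points:
  assumes "distinct (map snd W)" "sum_list (map fst W) = 0" "None \<notin> set (map snd W)"
  shows "expect_sym \<sigma> W = exp (energy \<sigma> (charges_of W))"
proof -
  define L where "L = map (\<lambda>(k, p). (k, the p)) W"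
  have "inj_on the (set (map snd W))"
  proof (rule inj_onI)
    fix p q assume "p \<in> set (map snd W)" "q \<in> set (map snd W)" "the p = the q"
    with assms(3) show "p = q" by (metis option.expand)
  qed
  then have "distinct (map snd L)"
    using assms(1) by (simp add: L_def distinct_map case_prod_unfold comp_def inj_on_def)
  moreover have "map fst L = map fst W" "map snd L = map the (map snd W)"
    by (simp_all add: L_def case_prod_unfold)
  moreover have "set L = charges_of W"
  proof -
    have "snd x \<noteq> None" if "x \<in> set W" for x
      using assms(3) that by (metis image_eqI set_map)
    then have "{x \<in> set W. snd x \<noteq> None} = set W" by blast
    then show ?thesis by (simp add: L_def charges_of_def)
  qed
  ultimately show ?thesis
    using expect_fin_eq_exp_energy[of L \<sigma>] assms by (simp add: expect_sym_def)
qed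

lemma ex_not_in_finite_points: "\<exists>a. Some a \<notin> set (ps :: complex option list)"
proof -
  have "finite (Some -` set ps)" by (rule finite_vimageI) simp_all
  then show ?thesis using ex_new_if_finite[OF infinite_UNIV_char_0] by auto
qed

definition chart_symbol :: "complex \<Rightarrow> symbol \<Rightarrow> (int \<times> complex) list" where
  "chart_symbol a W = map (\<lambda>(k, p). (k, case p of None \<Rightarrow> 0 | Some z \<Rightarrow> 1 / (z - a))) W"

lemma set_chart_symbol:
  "set (chart_symbol a W)
    = (\<lambda>(k, z). (k, 1 / (z - a))) ` charges_of W \<union> (\<lambda>(k, p). (k, 0)) ` {x \<in> set W. snd x = None}"
proof -
  have "set (chart_symbol a W) = (\<lambda>(k, p). (k, case p of None \<Rightarrow> 0 | Some z \<Rightarrow> 1 / (z - a)))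
      ` ({x \<in> set W. snd x \<noteq> None} \<union> {x \<in> set W. snd x = None})"
    unfolding chart_symbol_def set_map by (rule arg_cong[where f = "image _"]) auto
  also have "\<dots> = (\<lambda>(k, z). (k, 1 / (z - a))) ` charges_of W \<union> (\<lambda>(k, p). (k, 0)) ` {x \<in> set W. snd x = None}"
    unfolding image_Un charges_of_def image_image
    by (intro arg_cong2[where f = "(\<union>)"] image_cong refl) (auto simp: case_prod_unfold)
  finally show ?thesis .
qed

lemma distinct_chart_symbol:
  assumes "distinct (map snd W)" "Some a \<notin> set (map snd W)"
  shows "distinct (map snd (chart_symbol a W))"
proof -
  have "inj_on (\<lambda>p. case p of None \<Rightarrow> 0 | Some z \<Rightarrow> 1 / (z - a)) (set (map snd W))"
  proof (rule inj_onI)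
    fix p q assume "p \<in> set (map snd W)" "q \<in> set (map snd W)"
      and "(case p of None \<Rightarrow> 0 | Some z \<Rightarrow> 1 / (z - a)) = (case q of None \<Rightarrow> 0 | Some z \<Rightarrow> 1 / (z - a))"
    with assms(2) show "p = q"
      by (cases p; cases q) auto
  qed
  then show ?thesis
    using assms(1) by (simp add: chart_symbol_def distinct_map case_prod_unfold comp_def inj_on_def)
qed

lemma expect_sym_point_at_infinity:
  assumes "distinct (map snd W)" "sum_list (map fst W) = 0" "None \<in> set (map snd W)"
  shows "expect_sym \<sigma> W = exp (energy \<sigma> (charges_of W)
    - (real_of_int (charge_at_infinity W))\<^sup>2 * sigma_inf \<sigma> / (8 * pi))"
proof -
  define a where "a = (SOME a. Some a \<notin> set (map snd W))"
  have a: "Some a \<notin> set (map snd W)"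
    unfolding a_def using ex_not_in_finite_points by (rule someI_ex)
  define \<sigma>' where "\<sigma>' = (\<lambda>w. if w = 0 then sigma_inf \<sigma> else \<sigma> (a + 1 / w) - 4 * ln (cmod w))"
  define P where "P = (\<lambda>(k, p). (k, 0 :: complex)) ` {x \<in> set W. snd x = None}"
  have charge_P: "total_charge P = charge_at_infinity W"
    unfolding total_charge_def charge_at_infinity_def
  proof (rule sum.reindex_cong[where l = "\<lambda>(k, p). (k, 0)"])
    show "inj_on (\<lambda>(k, p). (k, 0 :: complex)) {x \<in> set W. snd x = None}"
      by (auto simp: inj_on_def prod_eq_iff)
  qed (simp_all add: P_def case_prod_unfold)
  have "expect_sym \<sigma> W = expect_fin \<sigma>' (map fst (chart_symbol a W)) (map snd (chart_symbol a W))"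
    using assms(3) unfolding expect_sym_def Let_def a_def[symmetric] \<sigma>'_def
    by (simp add: chart_symbol_def case_prod_unfold comp_def)
  also have "\<dots> = exp (energy \<sigma>' (set (chart_symbol a W)))"
    using distinct_chart_symbol[OF assms(1) a] assms(2)
    by (intro expect_fin_eq_exp_energy) (simp_all add: chart_symbol_def comp_def case_prod_unfold)
  also have "set (chart_symbol a W) = (\<lambda>(k, z). (k, 1 / (z - a))) ` charges_of W \<union> P"
    by (simp add: set_chart_symbol P_def)
  also have "energy \<sigma>' ((\<lambda>(k, z). (k, 1 / (z - a))) ` charges_of W \<union> P)
    = energy \<sigma> (charges_of W) - (real_of_int (total_charge P))\<^sup>2 * sigma_inf \<sigma> / (8 * pi)"
    unfolding \<sigma>'_def
  proof (rule energy_chart_at_infinity)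
    show "inj_on snd (charges_of W)" using assms(1) by (rule inj_on_snd_charges_of)
    show "snd x \<noteq> a" if "x \<in> charges_of W" for x
      using a that by (auto simp: charges_of_def image_iff)
    show "inj_on snd P"
      using assms(1) by (auto simp: P_def inj_on_def distinct_map) (metis prod.inject snd_conv)
    show "total_charge (charges_of W) + total_charge P = 0"
      using sum_list_charges_eq[OF assms(1)] assms(2) charge_P by simp
  qed (auto simp: P_def)
  finally show ?thesis by (simp add: charge_P)
qed

lemma expect_sym_neutral:
  assumes "distinct (map snd W)" "sum_list (map fst W) = 0"
  shows "expect_sym \<sigma> W = exp (energy \<sigma> (charges_of W)
    - (real_of_int (charge_at_infinity W))\<^sup>2 * sigma_inf \<sigma> / (8 * pi))"
proof (cases "None \<in> set (map snd W)")
  case True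
  then show ?thesis by (rule expect_sym_point_at_infinity[OF assms])
next
  case False
  then show ?thesis using expect_sym_finite_points[OF assms False] charge_at_infinity_eq_0 by simp
qed

section \<open>Reflected symbols\<close>

lemma theta_theta: "theta (theta p) = p"
  by (cases p) (auto simp: theta_def)

lemma theta_eq_None_iff: "theta p = None \<longleftrightarrow> p = Some 0"
  by (cases p) (simp_all add: theta_def)

lemma theta_Some_nonzero: "z \<noteq> 0 \<Longrightarrow> theta (Some z) = Some (1 / cnj z)"
  by (simp add: theta_def)

lemma theta_notin_B0:
  assumes "p \<in> B0"
  shows "theta p \<notin> B0"
proof -
  obtain z where z: "p = Some z" "cmod z < 1"
    using assms by (auto simp: B0_def)
  show ?thesis
  proof (cases "z = 0")
    case False
    then have "1 < cmod (1 / cnj z)"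
      using z(2) by (simp add: norm_divide)
    then show ?thesis using z False by (auto simp: B0_def theta_def)
  qed (simp add: z B0_def theta_def)
qed

lemma Theta_sym_Theta_sym: "Theta_sym (Theta_sym Y) = Y"
  by (induction Y) (auto simp: Theta_sym_def theta_theta)

lemma sum_list_Theta_sym: "sum_list (map fst (Theta_sym Y)) = - sum_list (map fst Y)"
  by (induction Y) (auto simp: Theta_sym_def)

definition disk_symbol :: "symbol \<Rightarrow> bool" where
  "disk_symbol Y \<longleftrightarrow> distinct (map snd Y) \<and> set (map snd Y) \<subseteq> B0"

lemma disk_symbol_no_infinity: "disk_symbol Y \<Longrightarrow> None \<notin> set (map snd Y)"
  by (auto simp: disk_symbol_def B0_def)

lemma disk_symbol_charges_in_disk:
  assumes "disk_symbol Y" "x \<in> charges_of Y"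
  shows "cmod (snd x) < 1"
proof -
  obtain y where "y \<in> set Y" "snd y \<noteq> None" "x = (fst y, the (snd y))"
    using assms(2) by (auto simp: charges_of_def)
  moreover have "snd y \<in> B0"
    using assms(1) \<open>y \<in> set Y\<close> by (auto simp: disk_symbol_def)
  ultimately show ?thesis by (auto simp: B0_def)
qed

lemma sum_list_disk_symbol: "disk_symbol Y \<Longrightarrow> sum_list (map fst Y) = total_charge (charges_of Y)"
  using sum_list_charges_eq charge_at_infinity_eq_0 disk_symbol_no_infinity
  by (simp add: disk_symbol_def)

lemma charges_of_append: "charges_of (W @ V) = charges_of W \<union> charges_of V"
proof -
  have "{x \<in> set (W @ V). snd x \<noteq> None} = {x \<in> set W. snd x \<noteq> None} \<union> {x \<in> set V. snd x \<noteq> None}"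
    by auto
  then show ?thesis by (simp add: charges_of_def image_Un)
qed

lemma charge_at_infinity_append:
  assumes "None \<notin> set (map snd V)"
  shows "charge_at_infinity (W @ V) = charge_at_infinity W"
proof -
  have "{x \<in> set (W @ V). snd x = None} = {x \<in> set W. snd x = None}"
    using assms by (auto simp: image_iff)
  then show ?thesis by (simp add: charge_at_infinity_def)
qed

lemma charges_of_Theta_sym:
  assumes "None \<notin> set (map snd Y)"
  shows "charges_of (Theta_sym Y) = (\<lambda>(k, z). (- k, 1 / cnj z)) ` {x \<in> charges_of Y. snd x \<noteq> 0}"
proof -
  let ?N = "{y \<in> set Y. snd y \<noteq> Some 0}"
  have none: "snd y \<noteq> None" if "y \<in> set Y" for y
    using assms that by (metis image_eqI set_map)
  have "{x \<in> set (Theta_sym Y). snd x \<noteq> None}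
      = (\<lambda>y. (- fst y, theta (snd y))) ` {y \<in> set Y. theta (snd y) \<noteq> None}"
    unfolding Theta_sym_def set_map by (auto simp: case_prod_unfold)
  then have reflected: "{x \<in> set (Theta_sym Y). snd x \<noteq> None} = (\<lambda>y. (- fst y, theta (snd y))) ` ?N"
    by (simp add: theta_eq_None_iff)
  have nonzero: "{x \<in> charges_of Y. snd x \<noteq> 0} = (\<lambda>(k, p). (k, the p)) ` ?N"
    using none by (force simp: charges_of_def)
  have "(\<lambda>(k, p). (k, the p)) (- fst y, theta (snd y)) = (\<lambda>(k, z). (- k, 1 / cnj z)) ((\<lambda>(k, p). (k, the p)) y)"
    if "y \<in> ?N" for y
    using that none[of y] by (auto simp: theta_Some_nonzero case_prod_unfold)
  then have "charges_of (Theta_sym Y) = (\<lambda>(k, z). (- k, 1 / cnj z)) ` (\<lambda>(k, p). (k, the p)) ` ?N"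
    unfolding charges_of_def reflected image_image by (rule image_cong[OF refl])
  then show ?thesis
    unfolding nonzero .
qed

lemma charge_at_infinity_Theta_sym:
  assumes "None \<notin> set (map snd Y)"
  shows "charge_at_infinity (Theta_sym Y) = - total_charge {x \<in> charges_of Y. snd x = 0}"
proof -
  let ?Z = "{y \<in> set Y. snd y = Some 0}"
  have none: "snd y \<noteq> None" if "y \<in> set Y" for y
    using assms that by (metis image_eqI set_map)
  have "{x \<in> set (Theta_sym Y). snd x = None}
      = (\<lambda>y. (- fst y, theta (snd y))) ` {y \<in> set Y. theta (snd y) = None}"
    unfolding Theta_sym_def set_map by (auto simp: case_prod_unfold)
  then have reflected: "{x \<in> set (Theta_sym Y). snd x = None} = (\<lambda>y. (- fst y, theta (snd y))) ` ?Z"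
    by (simp add: theta_eq_None_iff)
  have origin: "{x \<in> charges_of Y. snd x = 0} = (\<lambda>(k, p). (k, the p)) ` ?Z"
    using none by (force simp: charges_of_def)
  have "charge_at_infinity (Theta_sym Y) = (\<Sum>y\<in>?Z. - fst y)"
    unfolding charge_at_infinity_def reflected
    by (rule sum.reindex_cong[OF _ refl]) (auto simp: inj_on_def prod_eq_iff)
  also have "\<dots> = - total_charge {x \<in> charges_of Y. snd x = 0}"
    unfolding total_charge_def origin sum_negf
    by (subst sum.reindex) (auto simp: inj_on_def prod_eq_iff case_prod_unfold)
  finally show ?thesis .
qed

lemma distinct_Theta_sym_append:
  assumes "disk_symbol Y" "disk_symbol C"
  shows "distinct (map snd (Theta_sym Y @ C))"
proof -
  have "map snd (Theta_sym Y) = map theta (map snd Y)"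
    by (simp add: Theta_sym_def case_prod_unfold)
  moreover have "distinct (map theta (map snd Y))"
    using assms(1) distinct_map[of theta "map snd Y"] inj_on_inverseI[of _ theta theta] theta_theta
    by (auto simp: disk_symbol_def)
  moreover have "set (map theta (map snd Y)) \<inter> set (map snd C) = {}"
    using assms theta_notin_B0 by (auto simp: disk_symbol_def)
  ultimately show ?thesis
    using assms(2) unfolding map_append distinct_append disk_symbol_def by simp
qed

lemma expect_sym_Theta_sym_append:
  assumes "theta_invariant \<sigma>" "continuous_on UNIV \<sigma>" "disk_symbol Y" "disk_symbol C"
  shows "expect_sym \<sigma> (Theta_sym Y @ C) =
    (if total_charge (charges_of Y) = total_charge (charges_of C)
     then exp (energy \<sigma> (charges_of Y) + energy \<sigma> (charges_of C) + cross_energy (charges_of Y) (charges_of C))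
     else 0)"
proof (cases "total_charge (charges_of Y) = total_charge (charges_of C)")
  case neutral: True
  have "charges_of (Theta_sym Y @ C)
      = (\<lambda>(k, z). (- k, 1 / cnj z)) ` {x \<in> charges_of Y. snd x \<noteq> 0} \<union> charges_of C"
    using disk_symbol_no_infinity[OF assms(3)] by (simp add: charges_of_append charges_of_Theta_sym)
  moreover have "charge_at_infinity (Theta_sym Y @ C) = - total_charge {x \<in> charges_of Y. snd x = 0}"
    using disk_symbol_no_infinity[OF assms(3)] disk_symbol_no_infinity[OF assms(4)]
    by (simp add: charge_at_infinity_append charge_at_infinity_Theta_sym)
  moreover have "sum_list (map fst (Theta_sym Y @ C)) = 0"
    using neutral sum_list_disk_symbol[OF assms(3)] sum_list_disk_symbol[OF assms(4)]
    by (simp add: sum_list_Theta_sym)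
  ultimately have "expect_sym \<sigma> (Theta_sym Y @ C)
      = exp (energy \<sigma> ((\<lambda>(k, z). (- k, 1 / cnj z)) ` {x \<in> charges_of Y. snd x \<noteq> 0} \<union> charges_of C)
          - (real_of_int (total_charge {x \<in> charges_of Y. snd x = 0}))\<^sup>2 * \<sigma> 0 / (8 * pi))"
    using expect_sym_neutral[OF distinct_Theta_sym_append[OF assms(3,4)]]
      sigma_inf_theta_invariant[OF assms(2,1)] by simp
  also have "\<dots> = exp (energy \<sigma> (charges_of Y) + energy \<sigma> (charges_of C)
      + cross_energy (charges_of Y) (charges_of C))"
    using assms(3,4) neutral
    by (subst energy_reflect_nonzero_Un[OF assms(1)])
      (simp_all add: disk_symbol_def inj_on_snd_charges_of disk_symbol_charges_in_disk)
  finally show ?thesis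
    using neutral by simp
next
  case False
  then show ?thesis
    using expect_sym_non_neutral sum_list_disk_symbol[OF assms(3)] sum_list_disk_symbol[OF assms(4)]
    by (simp add: sum_list_Theta_sym)
qed

section \<open>Reflection positivity\<close>

lemma tendsto_sum_Re_power_div:
  fixes t :: complex
  assumes "cmod t < 1"
  shows "(\<lambda>N. \<Sum>n<N. Re (t ^ n) / real n) \<longlonglongrightarrow> - ln (cmod (1 - t))"
proof -
  have "(\<lambda>n. - ((- (- t)) ^ n) / of_nat n) sums Ln (1 + - t)"
    using Ln_series'[of "- t"] assms by simp
  then have "(\<lambda>n. - (- (t ^ n) / of_nat n)) sums - Ln (1 - t)"
    by (intro sums_minus) simp
  then have "(\<lambda>n. Re (t ^ n / of_nat n)) sums Re (- Ln (1 - t))"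
    by (simp add: sums_complex_iff)
  moreover have "1 - t \<noteq> 0" using assms by auto
  ultimately show ?thesis by (simp add: sums_def)
qed

text \<open>The \<open>n = 0\<close> term vanishes because \<open>x / 0 = 0\<close>.\<close>
definition cross_energy_trunc :: "nat \<Rightarrow> (int \<times> complex) set \<Rightarrow> (int \<times> complex) set \<Rightarrow> real" where
  "cross_energy_trunc N A B = (\<Sum>x\<in>A. \<Sum>y\<in>B. real_of_int (fst x * fst y)
      * (\<Sum>n<N. Re ((cnj (snd x) * snd y) ^ n) / real n)) / (2 * pi)"

lemma tendsto_cross_energy_trunc:
  assumes "\<And>x. x \<in> A \<Longrightarrow> cmod (snd x) < 1" "\<And>y. y \<in> B \<Longrightarrow> cmod (snd y) < 1"
  shows "(\<lambda>N. cross_energy_trunc N A B) \<longlonglongrightarrow> cross_energy A B"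
proof -
  have "cmod (cnj (snd x) * snd y) < 1" if "x \<in> A" "y \<in> B" for x y
  proof -
    have "cmod (snd x) * cmod (snd y) < 1 * 1"
      using assms that by (intro mult_strict_mono') auto
    then show ?thesis by (simp add: norm_mult)
  qed
  then have "(\<lambda>N. cross_energy_trunc N A B) \<longlonglongrightarrow>
      (\<Sum>x\<in>A. \<Sum>y\<in>B. real_of_int (fst x * fst y) * - ln (cmod (1 - cnj (snd x) * snd y))) / (2 * pi)"
    unfolding cross_energy_trunc_def
    by (intro tendsto_divide tendsto_const tendsto_sum tendsto_mult_left tendsto_sum_Re_power_div) simp_all
  then show ?thesis
    by (simp add: cross_energy_def sum_negf)
qed

lemma rank_one_sum_cross_energy_trunc:
  "rank_one_sum (\<lambda>Y Z. complex_of_real (cross_energy_trunc N (g Y) (g Z)))"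
proof -
  define m :: "nat \<Rightarrow> (int \<times> complex) set \<Rightarrow> complex"
    where "m n A = (\<Sum>x\<in>A. of_int (fst x) * snd x ^ n)" for n A
  define m' :: "nat \<Rightarrow> (int \<times> complex) set \<Rightarrow> complex"
    where "m' n A = (\<Sum>x\<in>A. of_int (fst x) * cnj (snd x) ^ n)" for n A
  have moments: "cnj (m n A) * m n B + cnj (m' n A) * m' n B
      = of_real (\<Sum>x\<in>A. \<Sum>y\<in>B. real_of_int (fst x * fst y) * (2 * Re ((cnj (snd x) * snd y) ^ n)))"
    for n A B
  proof -
    have "cnj (m n A) * m n B + cnj (m' n A) * m' n B
        = (\<Sum>x\<in>A. \<Sum>y\<in>B. of_int (fst x * fst y)
            * ((cnj (snd x) * snd y) ^ n + cnj ((cnj (snd x) * snd y) ^ n)))"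
      unfolding m_def m'_def cnj_sum sum_product
      by (simp add: sum.distrib distrib_left power_mult_distrib mult_ac)
    also have "\<dots> = of_real (\<Sum>x\<in>A. \<Sum>y\<in>B. real_of_int (fst x * fst y) * (2 * Re ((cnj (snd x) * snd y) ^ n)))"
      by (simp only: complex_add_cnj of_real_sum of_real_mult of_real_of_int_eq)
    finally show ?thesis .
  qed
  have "complex_of_real (cross_energy_trunc N A B)
      = (\<Sum>n<N. (1 / (4 * pi * real n)) *\<^sub>R (cnj (m n A) * m n B + cnj (m' n A) * m' n B))" for A B
  proof -
    have summand: "c * (\<Sum>n<N. r n / real n) / (2 * pi) = (\<Sum>n<N. 1 / (4 * pi * real n) * (c * (2 * r n)))"
      for c :: real and r :: "nat \<Rightarrow> real"
      unfolding sum_distrib_left sum_divide_distrib by (intro sum.cong refl) (simp add: field_simps)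
    have "cross_energy_trunc N A B
        = (\<Sum>x\<in>A. \<Sum>y\<in>B. \<Sum>n<N. 1 / (4 * pi * real n)
            * (real_of_int (fst x * fst y) * (2 * Re ((cnj (snd x) * snd y) ^ n))))"
      unfolding cross_energy_trunc_def sum_divide_distrib summand ..
    also have "\<dots> = (\<Sum>x\<in>A. \<Sum>n<N. \<Sum>y\<in>B. 1 / (4 * pi * real n)
            * (real_of_int (fst x * fst y) * (2 * Re ((cnj (snd x) * snd y) ^ n))))"
      by (intro sum.cong refl sum.swap)
    also have "\<dots> = (\<Sum>n<N. 1 / (4 * pi * real n)
        * (\<Sum>x\<in>A. \<Sum>y\<in>B. real_of_int (fst x * fst y) * (2 * Re ((cnj (snd x) * snd y) ^ n))))"
      by (subst sum.swap) (simp add: sum_distrib_left)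
    finally have "cross_energy_trunc N A B = \<dots>" .
    then show ?thesis
      by (simp add: moments scaleR_conv_of_real)
  qed
  then show ?thesis
    by (simp add: rank_one_sum_sum rank_one_sum_scale rank_one_sum_plus rank_one_sum_rank_one)
qed

lemma pos_semidef_on_expect_Theta_sym_append:
  assumes "finite S" "\<And>Y. Y \<in> S \<Longrightarrow> disk_symbol Y" "theta_invariant \<sigma>" "continuous_on UNIV \<sigma>"
  shows "pos_semidef_on S (\<lambda>Y Z. complex_of_real (expect_sym \<sigma> (Theta_sym Y @ Z)))"
proof -
  define q where "q Y = total_charge (charges_of Y)" for Y
  define h where "h Y = complex_of_real (exp (energy \<sigma> (charges_of Y)))" for Y
  define H where "H Y Z = (if q Y = q Z \<and> q Y \<in> q ` S then 1 else 0) * (cnj (h Y) * h Z)" for Y Z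
  have "rank_one_sum H"
    unfolding H_def[abs_def] using assms(1)
    by (intro rank_one_sum_mult rank_one_sum_level_sets rank_one_sum_rank_one) simp
  then have "pos_semidef_on S
      (\<lambda>Y Z. H Y Z * exp (of_real (cross_energy_trunc N (charges_of Y) (charges_of Z))))" for N
    by (rule pos_semidef_on_mult_exp[OF _ rank_one_sum_cross_energy_trunc])
  then show ?thesis
  proof (rule pos_semidef_on_limit)
    fix Y Z assume "Y \<in> S" "Z \<in> S"
    then have "(\<lambda>N. H Y Z * exp (of_real (cross_energy_trunc N (charges_of Y) (charges_of Z))))
        \<longlonglongrightarrow> H Y Z * exp (of_real (cross_energy (charges_of Y) (charges_of Z)))"
      using assms(2) disk_symbol_charges_in_disk
      by (intro tendsto_intros tendsto_cross_energy_trunc) auto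
    moreover have "H Y Z * exp (of_real (cross_energy (charges_of Y) (charges_of Z)))
        = complex_of_real (expect_sym \<sigma> (Theta_sym Y @ Z))"
      using \<open>Y \<in> S\<close> expect_sym_Theta_sym_append[OF assms(3,4) assms(2)[OF \<open>Y \<in> S\<close>] assms(2)[OF \<open>Z \<in> S\<close>]]
      by (simp add: H_def h_def q_def exp_of_real exp_add)
    ultimately show "(\<lambda>N. H Y Z * exp (of_real (cross_energy_trunc N (charges_of Y) (charges_of Z))))
        \<longlonglongrightarrow> complex_of_real (expect_sym \<sigma> (Theta_sym Y @ Z))"
      by simp
  qed
qed

lemma finite_splits: "finite {(Z, Z'). Z @ Z' = W}"
proof (rule finite_subset)
  show "{(Z, Z'). Z @ Z' = W} \<subseteq> (\<lambda>n. (take n W, drop n W)) ` {..length W}"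
  proof
    fix p assume "p \<in> {(Z, Z'). Z @ Z' = W}"
    then obtain Z Z' where "p = (Z, Z')" "Z @ Z' = W" by blast
    then show "p \<in> (\<lambda>n. (take n W, drop n W)) ` {..length W}"
      by (intro image_eqI[of _ _ "length Z"]) auto
  qed
qed simp

lemma sum_support_ups_mult:
  fixes e :: "symbol \<Rightarrow> complex"
  assumes "finite {Y. G Y \<noteq> 0}" "finite {Z. F Z \<noteq> 0}"
  shows "(\<Sum>W\<in>{W. ups_mult G F W \<noteq> 0}. ups_mult G F W * e W)
    = (\<Sum>Y\<in>{Y. G Y \<noteq> 0}. \<Sum>Z\<in>{Z. F Z \<noteq> 0}. G Y * F Z * e (Y @ Z))"
proof -
  define R where "R = {Y. G Y \<noteq> 0} \<times> {Z. F Z \<noteq> 0}"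
  define T where "T = (\<lambda>p. fst p @ snd p) ` R"
  have finite: "finite R" "finite T"
    using assms by (simp_all add: R_def T_def)
  have mult: "ups_mult G F W = (\<Sum>p\<in>{p \<in> R. fst p @ snd p = W}. G (fst p) * F (snd p))" for W
  proof -
    have "ups_mult G F W = (\<Sum>p\<in>{(Y, Z). Y @ Z = W}. G (fst p) * F (snd p))"
      unfolding ups_mult_def by (rule sum.cong) auto
    also have "\<dots> = (\<Sum>p\<in>{p \<in> R. fst p @ snd p = W}. G (fst p) * F (snd p))"
      by (rule sum.mono_neutral_right[OF finite_splits]) (auto simp: R_def)
    finally show ?thesis .
  qed
  have "{W. ups_mult G F W \<noteq> 0} \<subseteq> T"
  proof
    fix W assume "W \<in> {W. ups_mult G F W \<noteq> 0}"
    moreover have "ups_mult G F W = 0" if "{p \<in> R. fst p @ snd p = W} = {}"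
      using that by (simp only: mult sum.empty)
    ultimately have "{p \<in> R. fst p @ snd p = W} \<noteq> {}" by blast
    then show "W \<in> T"
      unfolding T_def by blast
  qed
  then have "(\<Sum>W\<in>{W. ups_mult G F W \<noteq> 0}. ups_mult G F W * e W) = (\<Sum>W\<in>T. ups_mult G F W * e W)"
    by (intro sum.mono_neutral_left finite) auto
  also have "\<dots> = (\<Sum>W\<in>T. \<Sum>p\<in>{p \<in> R. fst p @ snd p = W}. G (fst p) * F (snd p) * e (fst p @ snd p))"
    unfolding mult sum_distrib_right by (intro sum.cong refl) auto
  also have "\<dots> = (\<Sum>p\<in>R. G (fst p) * F (snd p) * e (fst p @ snd p))"
    by (rule sum.group[OF finite]) (auto simp: T_def)
  also have "\<dots> = (\<Sum>Y\<in>{Y. G Y \<noteq> 0}. \<Sum>Z\<in>{Z. F Z \<noteq> 0}. G Y * F Z * e (Y @ Z))"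
    unfolding R_def by (simp add: sum.cartesian_product case_prod_unfold)
  finally show ?thesis .
qed

lemma expect_ups_mult_Theta_up:
  assumes "in_Upsilon F"
  shows "expect \<sigma> (ups_mult (Theta_up F) F) = (\<Sum>Y\<in>{Y. F Y \<noteq> 0}. \<Sum>Z\<in>{Z. F Z \<noteq> 0}.
      cnj (F Y) * F Z * complex_of_real (expect_sym \<sigma> (Theta_sym Y @ Z)))"
proof -
  have support: "{Y. Theta_up F Y \<noteq> 0} = Theta_sym ` {Y. F Y \<noteq> 0}"
    by (auto simp: Theta_up_def image_iff Theta_sym_Theta_sym) (metis Theta_sym_Theta_sym)
  have inj: "inj_on Theta_sym {Y. F Y \<noteq> 0}"
    by (metis inj_on_inverseI Theta_sym_Theta_sym)
  have "expect \<sigma> (ups_mult (Theta_up F) F) = (\<Sum>Y\<in>{Y. Theta_up F Y \<noteq> 0}. \<Sum>Z\<in>{Z. F Z \<noteq> 0}.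
      Theta_up F Y * F Z * complex_of_real (expect_sym \<sigma> (Y @ Z)))"
    unfolding expect_def using assms by (intro sum_support_ups_mult) (simp_all add: support in_Upsilon_def)
  also have "\<dots> = (\<Sum>Y\<in>{Y. F Y \<noteq> 0}. \<Sum>Z\<in>{Z. F Z \<noteq> 0}.
      cnj (F Y) * F Z * complex_of_real (expect_sym \<sigma> (Theta_sym Y @ Z)))"
    unfolding support sum.reindex[OF inj] by (simp add: Theta_up_def Theta_sym_Theta_sym)
  finally show ?thesis .
qed

lemma conformal_metric_continuous: "conformal_metric \<sigma> \<Longrightarrow> continuous_on UNIV \<sigma>"
  by (metis Ck_on.simps(1) conformal_metric_def smooth_on_def)

theorem mainTheorem14:
  fixes \<sigma> :: "complex \<Rightarrow> real" and F :: upsilon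
  assumes "conformal_metric \<sigma>"
    and "theta_invariant \<sigma>"
    and "in_Upsilon0 F" and "in_UpsilonA B0 F"
  shows "Im (expect \<sigma> (ups_mult (Theta_up F) F)) = 0
         \<and> 0 \<le> Re (expect \<sigma> (ups_mult (Theta_up F) F))"
proof -
  have "continuous_on UNIV \<sigma>"
    using assms(1) by (rule conformal_metric_continuous)
  moreover have "disk_symbol Y" if "F Y \<noteq> 0" for Y
    using assms(3,4) that by (simp add: disk_symbol_def in_Upsilon0_def in_UpsilonA_def)
  moreover have "finite {Y. F Y \<noteq> 0}"
    using assms(3) by (simp add: in_Upsilon0_def in_Upsilon_def)
  ultimately have "pos_semidef_on {Y. F Y \<noteq> 0} (\<lambda>Y Z. complex_of_real (expect_sym \<sigma> (Theta_sym Y @ Z)))"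
    using assms(2) by (intro pos_semidef_on_expect_Theta_sym_append) auto
  then have "0 \<le> expect \<sigma> (ups_mult (Theta_up F) F)"
    using assms(3) by (simp add: expect_ups_mult_Theta_up pos_semidef_on_def in_Upsilon0_def)
  then show ?thesis
    by (simp add: less_eq_complex_def)
qed

end
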